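(* Consider the cache-aided packet-erasure broadcast network described in the context with $K_\mathrm{w}=K_\mathrm{s}=1$, $D=2$ and equal erasure probabilities $\delta_\mathrm{w}=\delta_\mathrm{s}=\delta$. Then \[ C(M)=\begin{cases}\tfrac12F(1-\delta)+\tfrac M2,&\tfrac M2\in\big[0,\tfrac12F(1-\delta)\big],\\[1mm] F(1-\delta),&\tfrac M2\in\big(\tfrac12F(1-\delta),\,F(1-\delta)\big].\end{cases} \]
   Context: Setting: a memoryless packet-erasure broadcast channel with input alphabet $\mathcal X=\{0,1\}^F$ ($F$ a positive integer) and two receivers, each of which independently-in-marginal observes $Y_k=x$ with probability $1-\delta$ and an erasure symbol $\Delta$ with probability $\delta$, where $0<\delta<1$. The library consists of $D=2$ independent messages $W_1,W_2$, each uniform on $\{1,\dots,\lfloor 2^{nR}\rfloor\}$. Caching phase (demands unknown): receiver 1 stores $V_1=g_1(W_1,W_2)\in\{1,\dots,\lfloor2^{nM}\rfloor\}$; receiver 2 has no cache. Delivery: an arbitrary demand vector $(d_1,d_2)\in\{1,2\}^2$ is known to all; the transmitter sends $X^n=f_{\mathbf d}(W_1,W_2)$; receiver 1 decodes $W_{d_1}$ from $(Y_1^n,V_1)$ and receiver 2 decodes $W_{d_2}$ from $Y_2^n$. $(R,M)$ is achievable if for every $\epsilon>0$ there exist $n$ and such functions with worst-case (over all demand vectors) probability that some receiver errs $<\epsilon$. $C(M)$ is the supremum of achievable $R$ for memory $M$. *)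

theory Defs
  imports "HOL-Probability.Probability"
begin

text \<open>Per channel use the
  erasure events of the two receivers are drawn i.i.d. from a joint pmf q on
  bool \<times> bool (True = erased); fst = receiver 1 (with cache), snd = receiver 2.\<close>

definition msg_size :: "nat \<Rightarrow> real \<Rightarrow> nat" where
  "msg_size n R = nat \<lfloor>2 powr (real n * R)\<rfloor>"

definition sel :: "nat \<Rightarrow> nat \<Rightarrow> nat \<Rightarrow> nat" where
  "sel k w1 w2 = (if k = 1 then w1 else w2)"

definition src_pmf :: "nat \<Rightarrow> nat \<Rightarrow> (bool \<times> bool) pmf \<Rightarrow> (nat \<times> nat \<times> (nat \<Rightarrow> bool \<times> bool)) pmf" where
  "src_pmf n L q =
     do { w1 \<leftarrow> pmf_of_set {1..L};
          w2 \<leftarrow> pmf_of_set {1..L};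
          E \<leftarrow> Pi_pmf {..<n} (False, False) (\<lambda>_. q);
          return_pmf (w1, w2, E) }"

text \<open>Probability that some receiver errs, for demand vector d.
  f d w1 w2 i : channel input at time i; g w1 w2 : cache content of receiver 1;
  dec1 d y v : decoder of receiver 1; dec2 d y : decoder of receiver 2.\<close>
definition err_prob ::
  "nat \<Rightarrow> nat \<Rightarrow> (bool \<times> bool) pmf
   \<Rightarrow> (nat \<times> nat \<Rightarrow> nat \<Rightarrow> nat \<Rightarrow> nat \<Rightarrow> bool list)
   \<Rightarrow> (nat \<Rightarrow> nat \<Rightarrow> nat)
   \<Rightarrow> (nat \<times> nat \<Rightarrow> (nat \<Rightarrow> bool list option) \<Rightarrow> nat \<Rightarrow> nat)
   \<Rightarrow> (nat \<times> nat \<Rightarrow> (nat \<Rightarrow> bool list option) \<Rightarrow> nat)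
   \<Rightarrow> nat \<times> nat \<Rightarrow> real" where
  "err_prob n L q f g dec1 dec2 d =
     measure_pmf.prob (src_pmf n L q)
       {(w1, w2, E).
          let x = f d w1 w2;
              Y1 = (\<lambda>i. if i < n \<and> \<not> fst (E i) then Some (x i) else None);
              Y2 = (\<lambda>i. if i < n \<and> \<not> snd (E i) then Some (x i) else None)
          in dec1 d Y1 (g w1 w2) \<noteq> sel (fst d) w1 w2 \<or> dec2 d Y2 \<noteq> sel (snd d) w1 w2}"

definition valid_code ::
  "nat \<Rightarrow> nat \<Rightarrow> nat \<Rightarrow> nat \<Rightarrow> (nat \<times> nat \<Rightarrow> nat \<Rightarrow> nat \<Rightarrow> nat \<Rightarrow> bool list)
   \<Rightarrow> (nat \<Rightarrow> nat \<Rightarrow> nat) \<Rightarrow> bool" where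
  "valid_code F n L Lc f g \<longleftrightarrow>
     (\<forall>d w1 w2 i. length (f d w1 w2 i) = F) \<and>
     (\<forall>w1\<in>{1..L}. \<forall>w2\<in>{1..L}. g w1 w2 \<in> {1..Lc})"

definition achievable :: "nat \<Rightarrow> (bool \<times> bool) pmf \<Rightarrow> real \<Rightarrow> real \<Rightarrow> bool" where
  "achievable F q R M \<longleftrightarrow>
     (\<forall>\<epsilon>>0. \<forall>N. \<exists>n\<ge>N. \<exists>f g dec1 dec2.
        valid_code F n (msg_size n R) (msg_size n M) f g \<and>
        (\<forall>d\<in>{1,2} \<times> {1,2}. err_prob n (msg_size n R) q f g dec1 dec2 d < \<epsilon>))"

definition capacity :: "nat \<Rightarrow> (bool \<times> bool) pmf \<Rightarrow> real \<Rightarrow> real" where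
  "capacity F q M = Sup {R. achievable F q R M}"

end

theory Submission
  imports Defs "HOL-Real_Asymp.Real_Asymp"
begin

text \<open>Each receiver sees the same binary erasure channel with F-bit packets, so in n uses roughly
  nF(1 - \<delta>) bits get through.

  Converse: for an erasure pattern with k unerased slots, at most 2^(Fk) |A| message pairs can be
  recovered from what one receiver sees together with side information ranging over A.  Since both
  receivers' views have the same law, decoding both files for the demand (1,2) from the view of
  receiver 1 and its cache gives 2R \<le> F(1 - \<delta>) + M, and decoding W1 at receiver 2 for the
  demand (1,1), with W2 as side information, gives 2R \<le> F(1 - \<delta>) + R.

  Achievability: receiver 1 caches (W1 + W2) mod 2^(nM).  The transmitter sends a codeword indexed by
  the demanded file of receiver 2 and the part of the demanded file of receiver 1 that the cache does
  not reveal, so a codebook of about 2^(n(2R - M)) + 2^(nR) codewords suffices; a random codebook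
  decoded by consistency with the unerased packets has vanishing error probability as long as its
  rate is below F(1 - \<delta>).\<close>

section \<open>Facts about discrete distributions\<close>

lemma measure_pmf_prob_bind:
  "measure_pmf.prob (bind_pmf M N) X = measure_pmf.expectation M (\<lambda>x. measure_pmf.prob (N x) X)"
proof -
  have int: "integrable (measure_pmf M) (\<lambda>x. measure_pmf.prob (N x) X)"
    by (rule measure_pmf.integrable_const_bound[where B=1]) auto
  have "ennreal (measure_pmf.prob (bind_pmf M N) X) = (\<integral>\<^sup>+x. ennreal (measure_pmf.prob (N x) X) \<partial>M)"
    by (simp add: measure_pmf.emeasure_eq_measure[symmetric])
  also have "\<dots> = ennreal (measure_pmf.expectation M (\<lambda>x. measure_pmf.prob (N x) X))"
    by (rule nn_integral_eq_integral[OF int]) auto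
  finally show ?thesis
    by (subst (asm) ennreal_inj) (auto intro: integral_nonneg_AE)
qed

lemma measure_pmf_prob_pair:
  "measure_pmf.prob (pair_pmf A B) {(a, b). P a b}
     = measure_pmf.expectation A (\<lambda>a. measure_pmf.prob B {b. P a b})"
  by (simp add: pair_pmf_def measure_pmf_prob_bind map_pmf_def[symmetric] vimage_def)

lemma expectation_prob_commute:
  "measure_pmf.expectation A (\<lambda>a. measure_pmf.prob B {b. P a b})
     = measure_pmf.expectation B (\<lambda>b. measure_pmf.prob A {a. P a b})"
proof -
  have "measure_pmf.prob (pair_pmf A B) {(a, b). P a b} = measure_pmf.prob (pair_pmf B A) {(b, a). P a b}"
    by (subst pair_commute_pmf) (simp add: vimage_def case_prod_unfold)
  thus ?thesis by (simp add: measure_pmf_prob_pair)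
qed

lemma pair_pmf_of_set:
  assumes "finite A" "A \<noteq> {}" "finite B" "B \<noteq> {}"
  shows "pair_pmf (pmf_of_set A) (pmf_of_set B) = pmf_of_set (A \<times> B)"
  by (rule pmf_eqI) (auto simp: pmf_pair assms card_cartesian_product indicator_def)

lemma one_minus_prob_le_prob:
  assumes "- E \<subseteq> S"
  shows "1 - measure_pmf.prob p E \<le> measure_pmf.prob p S"
  using assms measure_pmf.prob_compl[of E p] measure_pmf.finite_measure_mono[of "- E" S p]
  by (simp add: Compl_eq_Diff_UNIV)

lemma exists_in_set_pmf_le_expectation:
  fixes f :: "'a \<Rightarrow> real"
  assumes "\<And>x. \<bar>f x\<bar> \<le> K"
  shows "\<exists>x\<in>set_pmf p. f x \<le> measure_pmf.expectation p f"
proof (rule ccontr)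
  assume "\<not> ?thesis"
  hence gt: "\<And>x. x \<in> set_pmf p \<Longrightarrow> measure_pmf.expectation p f < f x" by force
  have "integrable (measure_pmf p) f"
    by (rule measure_pmf.integrable_const_bound[where B=K]) (use assms in auto)
  hence "measure_pmf.expectation p (\<lambda>_. measure_pmf.expectation p f) < measure_pmf.expectation p f"
    by (intro measure_pmf.integral_less_AE_space) (use gt in \<open>auto intro!: AE_pmfI\<close>)
  thus False by simp
qed

lemma expectation_le_prob_add:
  fixes f :: "'a \<Rightarrow> real"
  assumes "\<And>x. 0 \<le> f x" "\<And>x. f x \<le> 1" "\<And>x. \<not> P x \<Longrightarrow> f x \<le> c" "0 \<le> c"
  shows "measure_pmf.expectation p f \<le> measure_pmf.prob p {x. P x} + c"
proof -
  have "measure_pmf.expectation p f \<le> measure_pmf.expectation p (\<lambda>x. indicator {x. P x} x + c)"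
  proof (rule integral_mono)
    show "integrable (measure_pmf p) f"
      by (rule measure_pmf.integrable_const_bound[where B=1]) (use assms in auto)
    show "integrable (measure_pmf p) (\<lambda>x. indicator {x. P x} x + c)"
      by (rule measure_pmf.integrable_const_bound[where B="1 + c"])
         (use assms in \<open>auto simp: indicator_def\<close>)
    show "f x \<le> indicator {x. P x} x + c" for x
      using assms(2)[of x] assms(3)[of x] assms(4) by (cases "P x") auto
  qed
  also have "\<dots> = measure_pmf.prob p {x. P x} + c"
    by (subst Bochner_Integration.integral_add) (auto simp: measure_pmf.emeasure_eq_measure)
  finally show ?thesis .
qed

lemma pmf_eq_bernoulli_pmf:
  fixes p :: "bool pmf"
  assumes "measure_pmf.prob p {True} = \<delta>"
  shows "p = bernoulli_pmf \<delta>"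
proof -
  have \<delta>: "0 \<le> \<delta>" "\<delta> \<le> 1" using assms by auto
  have "measure_pmf.prob p {True} + measure_pmf.prob p {False} = 1"
    by (subst measure_pmf.finite_measure_Union[symmetric]) (auto simp flip: UNIV_bool)
  hence "pmf p True = \<delta>" "pmf p False = 1 - \<delta>"
    using assms by (auto simp: measure_pmf_single)
  thus ?thesis
    by (intro pmf_eqI) (case_tac i, auto simp: \<delta>)
qed

lemma map_pmf_eq_bernoulli_pmf:
  assumes "measure_pmf.prob q {e. \<phi> e} = \<delta>"
  shows "map_pmf \<phi> q = bernoulli_pmf \<delta>"
proof (rule pmf_eq_bernoulli_pmf)
  have "\<phi> -` {True} = {e. \<phi> e}" by auto
  thus "measure_pmf.prob (map_pmf \<phi> q) {True} = \<delta>" using assms by simp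
qed

lemma binomial_upper_tail:
  assumes "n > 0" "0 \<le> p" "p \<le> 1" "\<eta> \<ge> 0"
  shows "measure_pmf.prob (binomial_pmf n p) {k. real n * (p + \<eta>) \<le> real k} \<le> exp (- (2 * real n * \<eta>^2))"
proof -
  have "{k. real n * (p + \<eta>) \<le> real k} = {k. real k / real n \<ge> p + \<eta>}"
    using assms by (auto simp: field_simps)
  thus ?thesis
    using binomial_distribution.prob_ge'[of p n \<eta>] assms by (simp add: binomial_distribution_def)
qed

lemma binomial_lower_tail:
  assumes "n > 0" "0 \<le> p" "p \<le> 1" "\<eta> \<ge> 0"
  shows "measure_pmf.prob (binomial_pmf n p) {k. real k \<le> real n * (p - \<eta>)} \<le> exp (- (2 * real n * \<eta>^2))"
proof -
  have "{k. real k \<le> real n * (p - \<eta>)} = {k. real k / real n \<le> p - \<eta>}"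
    using assms by (auto simp: field_simps)
  thus ?thesis
    using binomial_distribution.prob_le'[of p n \<eta>] assms by (simp add: binomial_distribution_def)
qed

lemma card_bool_lists: "card {b :: bool list. length b = F} = 2 ^ F"
  using card_lists_length_eq[of "UNIV :: bool set" F] by (simp add: card_UNIV_bool)

lemma finite_bool_lists: "finite {b :: bool list. length b = F}"
  using finite_lists_length_eq[of "UNIV :: bool set" F] by simp

lemma bool_lists_ne: "{b :: bool list. length b = F} \<noteq> {}"
  by (auto intro: exI[of _ "replicate F False"])

section \<open>The binary erasure model\<close>

definition erasure_pmf :: "nat \<Rightarrow> real \<Rightarrow> (nat \<Rightarrow> bool) pmf" where
  "erasure_pmf n \<delta> = Pi_pmf {..<n} False (\<lambda>_. bernoulli_pmf \<delta>)"

abbreviation unerased :: "nat \<Rightarrow> (nat \<Rightarrow> bool) \<Rightarrow> nat set" where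
  "unerased n B \<equiv> {i. i < n \<and> \<not> B i}"

definition received :: "nat \<Rightarrow> (nat \<Rightarrow> bool) \<Rightarrow> (nat \<Rightarrow> bool list) \<Rightarrow> nat \<Rightarrow> bool list option" where
  "received n B x = (\<lambda>i. if i < n \<and> \<not> B i then Some (x i) else None)"

definition erasure_src_pmf :: "nat \<Rightarrow> nat \<Rightarrow> real \<Rightarrow> (nat \<times> nat \<times> (nat \<Rightarrow> bool)) pmf" where
  "erasure_src_pmf n L \<delta> =
     bind_pmf (erasure_pmf n \<delta>)
       (\<lambda>B. map_pmf (\<lambda>(w1, w2). (w1, w2, B)) (pair_pmf (pmf_of_set {1..L}) (pmf_of_set {1..L})))"

lemma map_card_unerased_erasure_pmf:
  assumes "0 \<le> \<delta>" "\<delta> \<le> 1"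
  shows "map_pmf (\<lambda>B. card (unerased n B)) (erasure_pmf n \<delta>) = binomial_pmf n (1 - \<delta>)"
proof -
  have Not: "map_pmf Not (bernoulli_pmf \<delta>) = bernoulli_pmf (1 - \<delta>)"
  proof (rule pmf_eq_bernoulli_pmf)
    have "Not -` {True} = {False}" by auto
    thus "measure_pmf.prob (map_pmf Not (bernoulli_pmf \<delta>)) {True} = 1 - \<delta>"
      using assms by (simp add: measure_pmf_single pmf_map)
  qed
  have "Pi_pmf {..<n} True (\<lambda>_. bernoulli_pmf (1 - \<delta>)) = map_pmf (\<lambda>h. Not \<circ> h) (erasure_pmf n \<delta>)"
    unfolding erasure_pmf_def Not[symmetric] by (subst Pi_pmf_map) auto
  moreover have "binomial_pmf n (1 - \<delta>)
      = map_pmf (\<lambda>f. card {x\<in>{..<n}. f x}) (Pi_pmf {..<n} True (\<lambda>_. bernoulli_pmf (1 - \<delta>)))"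
    by (rule binomial_pmf_altdef') (use assms in auto)
  ultimately show ?thesis by (simp add: pmf.map_comp o_def)
qed

lemma expectation_erasure_pmf_le:
  fixes h :: "(nat \<Rightarrow> bool) \<Rightarrow> real"
  assumes "0 \<le> \<delta>" "\<delta> \<le> 1" and "\<And>B. 0 \<le> h B" "\<And>B. h B \<le> 1"
    and "\<And>B. \<not> P (card (unerased n B)) \<Longrightarrow> h B \<le> c" and "0 \<le> c"
  shows "measure_pmf.expectation (erasure_pmf n \<delta>) h
           \<le> measure_pmf.prob (binomial_pmf n (1 - \<delta>)) {k. P k} + c"
proof -
  have "measure_pmf.expectation (erasure_pmf n \<delta>) h
          \<le> measure_pmf.prob (erasure_pmf n \<delta>) {B. P (card (unerased n B))} + c"
    by (rule expectation_le_prob_add) (use assms in auto)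
  also have "measure_pmf.prob (erasure_pmf n \<delta>) {B. P (card (unerased n B))}
      = measure_pmf.prob (binomial_pmf n (1 - \<delta>)) {k. P k}"
    by (simp add: map_card_unerased_erasure_pmf[OF assms(1,2), symmetric] vimage_def)
  finally show ?thesis .
qed

text \<open>The error event of receiver k depends on the erasure pattern only through its own
  coordinates, which are i.i.d. Bernoulli(\<delta>); so it may be evaluated in the model with a single
  erasure pattern.\<close>
lemma map_src_pmf_erasure:
  assumes "\<phi> (False, False) = False" and "map_pmf \<phi> q = bernoulli_pmf \<delta>"
  shows "map_pmf (\<lambda>(w1, w2, E). (w1, w2, \<phi> \<circ> E)) (src_pmf n L q) = erasure_src_pmf n L \<delta>"
proof -
  define U where "U = pmf_of_set {1..L}"
  define P where "P = Pi_pmf {..<n} (False, False) (\<lambda>_. q)"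
  have erasure: "erasure_pmf n \<delta> = map_pmf (\<lambda>h. \<phi> \<circ> h) P"
    unfolding erasure_pmf_def P_def using assms by (subst Pi_pmf_map[symmetric]) auto
  have "map_pmf (\<lambda>(w1, w2, E). (w1, w2, \<phi> \<circ> E)) (src_pmf n L q)
      = U \<bind> (\<lambda>w1. U \<bind> (\<lambda>w2. P \<bind> (\<lambda>E. return_pmf (w1, w2, \<phi> \<circ> E))))"
    unfolding src_pmf_def U_def P_def by (simp add: map_bind_pmf)
  also have "\<dots> = U \<bind> (\<lambda>w1. U \<bind> (\<lambda>w2. erasure_pmf n \<delta> \<bind> (\<lambda>B. return_pmf (w1, w2, B))))"
    unfolding erasure by (simp add: bind_map_pmf)
  also have "\<dots> = U \<bind> (\<lambda>w1. erasure_pmf n \<delta> \<bind> (\<lambda>B. U \<bind> (\<lambda>w2. return_pmf (w1, w2, B))))"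
    by (subst bind_commute_pmf) (rule refl)
  also have "\<dots> = erasure_pmf n \<delta> \<bind> (\<lambda>B. U \<bind> (\<lambda>w1. U \<bind> (\<lambda>w2. return_pmf (w1, w2, B))))"
    by (rule bind_commute_pmf)
  also have "\<dots> = erasure_src_pmf n L \<delta>"
    unfolding erasure_src_pmf_def U_def pair_pmf_def by (simp add: map_bind_pmf)
  finally show ?thesis .
qed

lemma prob_src_pmf_erasure:
  assumes "\<phi> (False, False) = False" "measure_pmf.prob q {e. \<phi> e} = \<delta>"
  shows "measure_pmf.prob (src_pmf n L q) {(w1, w2, E). P w1 w2 (\<lambda>i. \<phi> (E i))}
       = measure_pmf.prob (erasure_src_pmf n L \<delta>) {(w1, w2, B). P w1 w2 B}"
  unfolding map_src_pmf_erasure[OF assms(1) map_pmf_eq_bernoulli_pmf[OF assms(2)], symmetric]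
  by (simp add: vimage_def case_prod_unfold o_def)

lemma prob_erasure_src_pmf:
  assumes "L \<ge> 1"
  shows "measure_pmf.prob (erasure_src_pmf n L \<delta>) {(w1, w2, B). P w1 w2 B}
       = measure_pmf.expectation (erasure_pmf n \<delta>)
           (\<lambda>B. card ({1..L} \<times> {1..L} \<inter> {(w1, w2). P w1 w2 B}) / (real L)^2)"
  using assms
  by (simp add: erasure_src_pmf_def measure_pmf_prob_bind pair_pmf_of_set case_prod_unfold vimage_def
      measure_pmf_of_set card_cartesian_product power2_eq_square)

lemma set_erasure_src_pmf:
  "L \<ge> 1 \<Longrightarrow> (w1, w2, B) \<in> set_pmf (erasure_src_pmf n L \<delta>) \<Longrightarrow> w1 \<in> {1..L} \<and> w2 \<in> {1..L}"
  unfolding erasure_src_pmf_def by (auto simp: set_pmf_of_set)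

lemma map_erasure_src_pmf_pattern: "map_pmf (\<lambda>(w1, w2, B). B) (erasure_src_pmf n L \<delta>) = erasure_pmf n \<delta>"
  unfolding erasure_src_pmf_def
  by (simp add: map_bind_pmf pmf.map_comp o_def case_prod_unfold bind_return_pmf')

definition error_event1 ::
  "nat \<Rightarrow> (nat \<times> nat \<Rightarrow> nat \<Rightarrow> nat \<Rightarrow> nat \<Rightarrow> bool list) \<Rightarrow> (nat \<Rightarrow> nat \<Rightarrow> nat)
   \<Rightarrow> (nat \<times> nat \<Rightarrow> (nat \<Rightarrow> bool list option) \<Rightarrow> nat \<Rightarrow> nat) \<Rightarrow> nat \<times> nat
   \<Rightarrow> (nat \<times> nat \<times> (nat \<Rightarrow> bool)) set" where
  "error_event1 n f g dec1 d =
     {(w1, w2, B). dec1 d (received n B (f d w1 w2)) (g w1 w2) \<noteq> sel (fst d) w1 w2}"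

definition error_event2 ::
  "nat \<Rightarrow> (nat \<times> nat \<Rightarrow> nat \<Rightarrow> nat \<Rightarrow> nat \<Rightarrow> bool list)
   \<Rightarrow> (nat \<times> nat \<Rightarrow> (nat \<Rightarrow> bool list option) \<Rightarrow> nat) \<Rightarrow> nat \<times> nat
   \<Rightarrow> (nat \<times> nat \<times> (nat \<Rightarrow> bool)) set" where
  "error_event2 n f dec2 d = {(w1, w2, B). dec2 d (received n B (f d w1 w2)) \<noteq> sel (snd d) w1 w2}"

context
  fixes q :: "(bool \<times> bool) pmf" and \<delta> :: real
  assumes erasure1: "measure_pmf.prob q {e. fst e} = \<delta>"
    and erasure2: "measure_pmf.prob q {e. snd e} = \<delta>"
begin

private lemma err_set_eq:
  "{(w1, w2, E).
      let x = f d w1 w2;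
          Y1 = (\<lambda>i. if i < n \<and> \<not> fst (E i) then Some (x i) else None);
          Y2 = (\<lambda>i. if i < n \<and> \<not> snd (E i) then Some (x i) else None)
      in dec1 d Y1 (g w1 w2) \<noteq> sel (fst d) w1 w2 \<or> dec2 d Y2 \<noteq> sel (snd d) w1 w2}
   = {(w1, w2, E). (w1, w2, \<lambda>i. fst (E i)) \<in> error_event1 n f g dec1 d}
     \<union> {(w1, w2, E). (w1, w2, \<lambda>i. snd (E i)) \<in> error_event2 n f dec2 d}"
  by (auto simp: error_event1_def error_event2_def received_def Let_def)

private lemma prob_error_event1:
  "measure_pmf.prob (src_pmf n L q) {(w1, w2, E). (w1, w2, \<lambda>i. fst (E i)) \<in> error_event1 n f g dec1 d}
     = measure_pmf.prob (erasure_src_pmf n L \<delta>) (error_event1 n f g dec1 d)"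
  using prob_src_pmf_erasure[of fst q \<delta> n L "\<lambda>w1 w2 B. (w1, w2, B) \<in> error_event1 n f g dec1 d"] erasure1
  by simp

private lemma prob_error_event2:
  "measure_pmf.prob (src_pmf n L q) {(w1, w2, E). (w1, w2, \<lambda>i. snd (E i)) \<in> error_event2 n f dec2 d}
     = measure_pmf.prob (erasure_src_pmf n L \<delta>) (error_event2 n f dec2 d)"
  using prob_src_pmf_erasure[of snd q \<delta> n L "\<lambda>w1 w2 B. (w1, w2, B) \<in> error_event2 n f dec2 d"] erasure2
  by simp

lemma err_prob_le_error_events:
  "err_prob n L q f g dec1 dec2 d
     \<le> measure_pmf.prob (erasure_src_pmf n L \<delta>) (error_event1 n f g dec1 d)
       + measure_pmf.prob (erasure_src_pmf n L \<delta>) (error_event2 n f dec2 d)"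
  unfolding err_prob_def err_set_eq prob_error_event1[symmetric] prob_error_event2[symmetric]
  by (rule measure_Un_le) auto

lemma prob_error_event1_le_err_prob:
  "measure_pmf.prob (erasure_src_pmf n L \<delta>) (error_event1 n f g dec1 d) \<le> err_prob n L q f g dec1 dec2 d"
  unfolding err_prob_def err_set_eq prob_error_event1[symmetric]
  by (rule measure_pmf.finite_measure_mono) auto

lemma prob_error_event2_le_err_prob:
  "measure_pmf.prob (erasure_src_pmf n L \<delta>) (error_event2 n f dec2 d) \<le> err_prob n L q f g dec1 dec2 d"
  unfolding err_prob_def err_set_eq prob_error_event2[symmetric]
  by (rule measure_pmf.finite_measure_mono) auto

end

section \<open>Converse\<close>

text \<open>A decodable pair is determined by the packets on the unerased slots and the side information.\<close>
lemma card_decodable_le: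
  fixes x :: "nat \<Rightarrow> nat \<Rightarrow> nat \<Rightarrow> bool list" and aux :: "nat \<Rightarrow> nat \<Rightarrow> 'a"
  assumes len: "\<And>w1 w2 i. length (x w1 w2 i) = F"
    and aux: "\<And>w1 w2. w1 \<in> {1..L} \<Longrightarrow> w2 \<in> {1..L} \<Longrightarrow> aux w1 w2 \<in> A" and A: "finite A"
  shows "card ({1..L} \<times> {1..L} \<inter> {(w1, w2). D (received n B (x w1 w2)) (aux w1 w2) = (w1, w2)})
           \<le> 2 ^ (F * card (unerased n B)) * card A"
proof -
  define S where "S = unerased n B"
  define sl where "sl = sorted_list_of_set S"
  have sl: "set sl = S" "length sl = card S" unfolding sl_def S_def by auto
  define Vs where "Vs = {xs. set xs \<subseteq> {b :: bool list. length b = F} \<and> length xs = card S}"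
  define G where "G = {1..L} \<times> {1..L} \<inter> {(w1, w2). D (received n B (x w1 w2)) (aux w1 w2) = (w1, w2)}"
  define h where "h = (\<lambda>(w1, w2). (map (x w1 w2) sl, aux w1 w2))"
  have "inj_on h G"
  proof (rule inj_onI)
    fix u v assume u: "u \<in> G" and v: "v \<in> G" and huv: "h u = h v"
    obtain u1 u2 v1 v2 where uv: "u = (u1, u2)" "v = (v1, v2)" by force
    have "map (x u1 u2) sl = map (x v1 v2) sl" and a: "aux u1 u2 = aux v1 v2"
      using huv uv h_def by auto
    hence "received n B (x u1 u2) = received n B (x v1 v2)"
      using sl unfolding received_def S_def by (auto simp: map_eq_conv)
    thus "u = v" using u v a uv unfolding G_def by auto
  qed
  moreover have "h ` G \<subseteq> Vs \<times> A"
    using aux len sl unfolding h_def G_def Vs_def by auto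
  moreover have "finite (Vs \<times> A)"
    using A finite_bool_lists unfolding Vs_def by (auto intro!: finite_lists_length_eq)
  ultimately have "card G \<le> card (Vs \<times> A)"
    using card_inj_on_le by blast
  also have "\<dots> = (2 ^ F) ^ card S * card A"
    unfolding Vs_def card_cartesian_product using finite_bool_lists card_bool_lists
    by (simp add: card_lists_length_eq)
  finally show ?thesis unfolding G_def S_def by (simp add: power_mult)
qed

lemma prob_decodable_le:
  fixes x :: "nat \<Rightarrow> nat \<Rightarrow> nat \<Rightarrow> bool list" and aux :: "nat \<Rightarrow> nat \<Rightarrow> 'a" and t :: real
  assumes L: "L \<ge> 1" and \<delta>: "0 \<le> \<delta>" "\<delta> \<le> 1"
    and len: "\<And>w1 w2 i. length (x w1 w2 i) = F"
    and aux: "\<And>w1 w2. w1 \<in> {1..L} \<Longrightarrow> w2 \<in> {1..L} \<Longrightarrow> aux w1 w2 \<in> A" and A: "finite A"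
  shows "measure_pmf.prob (erasure_src_pmf n L \<delta>)
           {(w1, w2, B). D (received n B (x w1 w2)) (aux w1 w2) = (w1, w2)}
     \<le> measure_pmf.prob (binomial_pmf n (1 - \<delta>)) {k. t \<le> real k}
       + 2 powr (real F * t) * card A / (real L)^2"
proof -
  define decodable where "decodable B =
    {1..L} \<times> {1..L} \<inter> {(w1, w2). D (received n B (x w1 w2)) (aux w1 w2) = (w1, w2)}" for B
  have L2: "(real L)^2 > 0" using L by simp
  have "measure_pmf.prob (erasure_src_pmf n L \<delta>)
          {(w1, w2, B). D (received n B (x w1 w2)) (aux w1 w2) = (w1, w2)}
      = measure_pmf.expectation (erasure_pmf n \<delta>) (\<lambda>B. card (decodable B) / (real L)^2)"
    unfolding decodable_def by (rule prob_erasure_src_pmf[OF L])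
  also have "\<dots> \<le> measure_pmf.prob (binomial_pmf n (1 - \<delta>)) {k. t \<le> real k}
                  + 2 powr (real F * t) * card A / (real L)^2"
  proof (rule expectation_erasure_pmf_le[OF \<delta>])
    fix B
    have "card (decodable B) \<le> card ({1..L} \<times> {1..L})"
      unfolding decodable_def by (intro card_mono) auto
    hence "real (card (decodable B)) \<le> (real L)^2"
      by (simp add: card_cartesian_product power2_eq_square flip: of_nat_mult)
    thus "card (decodable B) / (real L)^2 \<le> 1" using L2 by simp
    assume "\<not> t \<le> real (card (unerased n B))"
    hence "real F * real (card (unerased n B)) \<le> real F * t" by (intro mult_left_mono) auto
    hence "2 ^ (F * card (unerased n B)) \<le> (2::real) powr (real F * t)"
      by (metis powr_realpow of_nat_mult powr_mono one_le_numeral zero_less_numeral)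
    moreover have "real (card (decodable B)) \<le> (2::real) ^ (F * card (unerased n B)) * card A"
      using of_nat_mono[OF card_decodable_le[of x F L aux A D n B, OF len aux A]]
      unfolding decodable_def by simp
    ultimately have "real (card (decodable B)) \<le> 2 powr (real F * t) * card A"
      by (meson mult_right_mono of_nat_0_le_iff order_trans)
    thus "card (decodable B) / (real L)^2 \<le> 2 powr (real F * t) * card A / (real L)^2"
      using L2 by (simp add: divide_right_mono)
  qed auto
  finally show ?thesis .
qed

context
  fixes q :: "(bool \<times> bool) pmf" and \<delta> :: real
  assumes erasure: "measure_pmf.prob q {e. fst e} = \<delta>" "measure_pmf.prob q {e. snd e} = \<delta>"
    and \<delta>: "0 \<le> \<delta>" "\<delta> \<le> 1"
begin

text \<open>With distinct demands both files are recovered from the view of receiver 1 and its cache.\<close>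
lemma converse_bound_distinct_demands:
  assumes code: "valid_code F n L Lc f g" and L: "L \<ge> 1"
    and err: "err_prob n L q f g dec1 dec2 (1, 2) < \<epsilon>"
  shows "1 - 2 * \<epsilon> \<le> measure_pmf.prob (binomial_pmf n (1 - \<delta>)) {k. t \<le> real k}
                      + 2 powr (real F * t) * Lc / (real L)^2"
proof -
  let ?P = "measure_pmf.prob (erasure_src_pmf n L \<delta>)"
  have len: "\<And>d w1 w2 i. length (f d w1 w2 i) = F"
    and cache: "\<And>w1 w2. w1 \<in> {1..L} \<Longrightarrow> w2 \<in> {1..L} \<Longrightarrow> g w1 w2 \<in> {1..Lc}"
    using code unfolding valid_code_def by auto
  have "1 - ?P (error_event1 n f g dec1 (1, 2) \<union> error_event2 n f dec2 (1, 2))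
      \<le> ?P {(w1, w2, B). (\<lambda>Y v. (dec1 (1, 2) Y v, dec2 (1, 2) Y))
                            (received n B (f (1, 2) w1 w2)) (g w1 w2) = (w1, w2)}"
    by (rule one_minus_prob_le_prob) (auto simp: error_event1_def error_event2_def sel_def)
  also have "\<dots> \<le> measure_pmf.prob (binomial_pmf n (1 - \<delta>)) {k. t \<le> real k}
                  + 2 powr (real F * t) * card {1..Lc} / (real L)^2"
    by (rule prob_decodable_le[OF L \<delta> len cache]) auto
  finally show ?thesis
    using measure_Un_le[of "error_event1 n f g dec1 (1, 2)" "erasure_src_pmf n L \<delta>"
        "error_event2 n f dec2 (1, 2)"]
      prob_error_event1_le_err_prob[OF erasure, of n L f g dec1 "(1, 2)" dec2]
      prob_error_event2_le_err_prob[OF erasure, of n L f dec2 "(1, 2)" g dec1] err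
    by simp
qed

text \<open>With equal demands receiver 2 recovers W1, and W2 serves as side information.\<close>
lemma converse_bound_equal_demands:
  assumes code: "valid_code F n L Lc f g" and L: "L \<ge> 1"
    and err: "err_prob n L q f g dec1 dec2 (1, 1) < \<epsilon>"
  shows "1 - \<epsilon> \<le> measure_pmf.prob (binomial_pmf n (1 - \<delta>)) {k. t \<le> real k}
                  + 2 powr (real F * t) / real L"
proof -
  let ?P = "measure_pmf.prob (erasure_src_pmf n L \<delta>)"
  have len: "\<And>d w1 w2 i. length (f d w1 w2 i) = F"
    using code unfolding valid_code_def by auto
  have "1 - ?P (error_event2 n f dec2 (1, 1))
      \<le> ?P {(w1, w2, B). (\<lambda>Y w. (dec2 (1, 1) Y, w)) (received n B (f (1, 1) w1 w2)) w2 = (w1, w2)}"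
    by (rule one_minus_prob_le_prob) (auto simp: error_event2_def sel_def)
  also have "\<dots> \<le> measure_pmf.prob (binomial_pmf n (1 - \<delta>)) {k. t \<le> real k}
                  + 2 powr (real F * t) * card {1..L} / (real L)^2"
    by (rule prob_decodable_le[OF L \<delta> len]) auto
  finally show ?thesis
    using prob_error_event2_le_err_prob[OF erasure, of n L f dec2 "(1, 1)" g dec1] err L
    by (simp add: power2_eq_square)
qed

end

lemma msg_size_le: "real (msg_size n R) \<le> 2 powr (real n * R)"
  unfolding msg_size_def by simp

lemma msg_size_ge: "real (msg_size n R) \<ge> 2 powr (real n * R) - 1"
  unfolding msg_size_def by linarith

lemma msg_size_pos: "R \<ge> 0 \<Longrightarrow> msg_size n R \<ge> 1"
  unfolding msg_size_def by (simp add: le_nat_floor ge_one_powr_ge_zero)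

lemma converse_rate_bound:
  assumes erasure: "measure_pmf.prob q {e. fst e} = \<delta>" "measure_pmf.prob q {e. snd e} = \<delta>"
    and \<delta>: "0 \<le> \<delta>" "\<delta> \<le> 1" and code: "valid_code F n (msg_size n R) (msg_size n M) f g"
    and n: "n > 0" and X: "2 \<le> 2 powr (real n * R)" and \<eta>: "\<eta> \<ge> 0"
    and err12: "err_prob n (msg_size n R) q f g dec1 dec2 (1, 2) < \<epsilon>"
    and err11: "err_prob n (msg_size n R) q f g dec1 dec2 (1, 1) < \<epsilon>"
  shows "1 - 2 * \<epsilon> \<le> exp (- (2 * real n * \<eta>^2))
                      + 4 * 2 powr (real n * (real F * (1 - \<delta> + \<eta>) + min R M - 2 * R))"
proof -
  define L where "L = msg_size n R"
  define X where "X = (2::real) powr (real n * R)"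
  define t where "t = real n * (1 - \<delta> + \<eta>)"
  define P where "P = (2::real) powr (real F * t)"
  have LX: "real L \<ge> X / 2" and L: "L \<ge> 1"
    using msg_size_ge[of n R] X unfolding L_def X_def by linarith+
  have "0 \<le> err_prob n L q f g dec1 dec2 (1, 1)" unfolding err_prob_def by simp
  hence "1 - 2 * \<epsilon> \<le> 1 - \<epsilon>" using err11 unfolding L_def by linarith
  hence "1 - 2 * \<epsilon> \<le> measure_pmf.prob (binomial_pmf n (1 - \<delta>)) {k. t \<le> real k}
                      + P * min L (msg_size n M) / (real L)^2"
    using converse_bound_distinct_demands[OF erasure \<delta> code[folded L_def] L, of dec1 dec2 \<epsilon> t]
      converse_bound_equal_demands[OF erasure \<delta> code[folded L_def] L, of dec1 dec2 \<epsilon> t]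
      err12 err11 L
    unfolding L_def P_def by (cases "msg_size n R \<le> msg_size n M") (auto simp: min_def power2_eq_square)
  also have "measure_pmf.prob (binomial_pmf n (1 - \<delta>)) {k. t \<le> real k} \<le> exp (- (2 * real n * \<eta>^2))"
    unfolding t_def using binomial_upper_tail[of n "1 - \<delta>" \<eta>] n \<delta> \<eta> by simp
  also have "P * min L (msg_size n M) / (real L)^2 \<le> P * 2 powr (real n * min R M) / (X / 2)^2"
  proof -
    have "real (min L (msg_size n M)) \<le> 2 powr (real n * min R M)"
      using msg_size_le[of n R] msg_size_le[of n M] unfolding L_def by (auto simp: min_def)
    thus ?thesis using LX X unfolding P_def X_def by (intro frac_le mult_left_mono power_mono) auto
  qed
  also have "P * 2 powr (real n * min R M) / (X / 2)^2
      = 4 * 2 powr (real n * (real F * (1 - \<delta> + \<eta>) + min R M - 2 * R))"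
  proof -
    have "X^2 = 2 powr (2 * (real n * R))"
      unfolding X_def by (simp add: powr_realpow[symmetric] powr_powr mult.commute)
    thus ?thesis
      unfolding P_def t_def by (simp add: powr_add[symmetric] powr_diff[symmetric] field_simps)
  qed
  finally show ?thesis by simp
qed

lemma achievable_rate_le:
  assumes F: "F > 0" and \<delta>: "0 < \<delta>" "\<delta> < 1" and M: "M \<ge> 0"
    and erasure: "measure_pmf.prob q {e. fst e} = \<delta>" "measure_pmf.prob q {e. snd e} = \<delta>"
    and ach: "achievable F q R M"
  shows "2 * R \<le> real F * (1 - \<delta>) + min R M"
proof (rule ccontr)
  define \<gamma> where "\<gamma> = (2 * R - real F * (1 - \<delta>) - min R M) / 2"
  define \<eta> where "\<eta> = \<gamma> / real F"
  assume "\<not> ?thesis"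
  hence \<gamma>: "\<gamma> > 0" unfolding \<gamma>_def by simp
  moreover have "real F * (1 - \<delta>) > 0" using F \<delta> by simp
  ultimately have R: "R > 0" using M unfolding \<gamma>_def min_def by (auto split: if_splits)
  have \<eta>: "\<eta> > 0" using \<gamma> F unfolding \<eta>_def by auto
  have exponent: "real F * (1 - \<delta> + \<eta>) + min R M - 2 * R = - \<gamma>"
    using F unfolding \<eta>_def \<gamma>_def by (simp add: field_simps)
  have "(\<lambda>n. 2 powr (- (real n * \<gamma>))) \<longlonglongrightarrow> 0"
    using \<gamma> by real_asymp
  hence "eventually (\<lambda>n. 2 powr (- (real n * \<gamma>)) < 1/16) sequentially"
    by (rule order_tendstoD) simp
  moreover have "eventually (\<lambda>n. exp (- (2 * real n * \<eta>^2)) < 1/4) sequentially"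
    using \<eta> by real_asymp
  moreover have "eventually (\<lambda>n. 2 \<le> 2 powr (real n * R)) sequentially"
    using R by real_asymp
  moreover have "eventually (\<lambda>n::nat. n > 0) sequentially"
    by (rule eventually_gt_at_top)
  ultimately have "\<forall>\<^sub>F n in sequentially. 2 powr (- (real n * \<gamma>)) < 1/16
      \<and> exp (- (2 * real n * \<eta>^2)) < 1/4 \<and> 2 \<le> 2 powr (real n * R) \<and> n > 0"
    by eventually_elim blast
  then obtain N where N: "\<And>n. n \<ge> N \<Longrightarrow> 2 powr (- (real n * \<gamma>)) < 1/16
      \<and> exp (- (2 * real n * \<eta>^2)) < 1/4 \<and> 2 \<le> 2 powr (real n * R) \<and> n > 0"
    unfolding eventually_sequentially by blast
  obtain n f g dec1 dec2 where n: "n \<ge> N" and code: "valid_code F n (msg_size n R) (msg_size n M) f g"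
    and err: "\<forall>d\<in>{1,2} \<times> {1,2}. err_prob n (msg_size n R) q f g dec1 dec2 d < 1/8"
    using ach unfolding achievable_def by (metis divide_pos_pos zero_less_numeral zero_less_one)
  have "1 - 2 * (1/8) \<le> exp (- (2 * real n * \<eta>^2)) + 4 * 2 powr (- (real n * \<gamma>))"
    using converse_rate_bound[OF erasure _ _ code, where \<eta> = \<eta> and \<epsilon> = "1/8"
        and ?dec1.0 = dec1 and ?dec2.0 = dec2] N[OF n] \<delta> \<eta> err
    unfolding exponent by simp
  thus False using N[OF n] by linarith
qed

section \<open>Random coding\<close>

definition uniform_block_pmf :: "nat \<Rightarrow> nat \<Rightarrow> (nat \<Rightarrow> bool list) pmf" where
  "uniform_block_pmf n F = Pi_pmf {..<n} (replicate F False) (\<lambda>_. pmf_of_set {b. length b = F})"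

definition random_codebook_pmf :: "nat \<Rightarrow> nat \<Rightarrow> nat \<Rightarrow> (nat \<Rightarrow> nat \<Rightarrow> bool list) pmf" where
  "random_codebook_pmf T n F = Pi_pmf {..<T} (\<lambda>_. replicate F False) (\<lambda>_. uniform_block_pmf n F)"

definition agree :: "nat \<Rightarrow> (nat \<Rightarrow> bool) \<Rightarrow> (nat \<Rightarrow> bool list) \<Rightarrow> (nat \<Rightarrow> bool list) \<Rightarrow> bool" where
  "agree n B c c' \<longleftrightarrow> (\<forall>i<n. \<not> B i \<longrightarrow> c i = c' i)"

definition confusable :: "nat \<Rightarrow> nat \<Rightarrow> (nat \<Rightarrow> nat \<Rightarrow> bool list) \<Rightarrow> (nat \<Rightarrow> bool) \<Rightarrow> nat \<Rightarrow> bool" where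
  "confusable n T C B m \<longleftrightarrow> (\<exists>m'<T. m' \<noteq> m \<and> agree n B (C m') (C m))"

definition consistent_decode :: "(nat \<Rightarrow> nat \<Rightarrow> bool list) \<Rightarrow> nat \<Rightarrow> (nat \<Rightarrow> bool list option) \<Rightarrow> nat" where
  "consistent_decode C T Y = (SOME m. m < T \<and> (\<forall>i. Y i \<noteq> None \<longrightarrow> Y i = Some (C m i)))"

lemma length_of_uniform_block:
  assumes "c \<in> set_pmf (uniform_block_pmf n F)"
  shows "length (c i) = F"
proof -
  have "\<forall>i. (i < n \<longrightarrow> length (c i) = F) \<and> (\<not> i < n \<longrightarrow> c i = replicate F False)"
    using assms finite_bool_lists[of F] bool_lists_ne[of F]
    by (simp add: uniform_block_pmf_def set_Pi_pmf PiE_dflt_def)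
  thus ?thesis by (cases "i < n") auto
qed

lemma length_of_random_codebook:
  assumes "C \<in> set_pmf (random_codebook_pmf T n F)"
  shows "length (C m i) = F"
proof -
  have "\<forall>m. (m < T \<longrightarrow> C m \<in> set_pmf (uniform_block_pmf n F)) \<and> (\<not> m < T \<longrightarrow> C m = (\<lambda>_. replicate F False))"
    using assms by (simp add: random_codebook_pmf_def set_Pi_pmf PiE_dflt_def)
  thus ?thesis by (cases "m < T") (auto simp: length_of_uniform_block)
qed

lemma prob_agree_uniform_block:
  assumes "\<And>i. i < n \<Longrightarrow> \<not> B i \<Longrightarrow> length (b i) = F"
  shows "measure_pmf.prob (uniform_block_pmf n F) {c. agree n B c b} = (1 / 2 ^ F) ^ card (unerased n B)"
proof -
  let ?Bs = "\<lambda>i. if \<not> B i then {b i} else UNIV"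
  have "{c. agree n B c b} = Pi {..<n} ?Bs" unfolding agree_def Pi_def by auto
  hence "measure_pmf.prob (uniform_block_pmf n F) {c. agree n B c b}
     = (\<Prod>i\<in>{..<n}. measure_pmf.prob (pmf_of_set {c :: bool list. length c = F}) (?Bs i))"
    unfolding uniform_block_pmf_def by (simp add: measure_Pi_pmf_Pi)
  also have "\<dots> = (\<Prod>i\<in>{..<n}. (if \<not> B i then 1 / 2 ^ F else 1))"
    using assms finite_bool_lists[of F] bool_lists_ne[of F]
    by (intro prod.cong) (auto simp: measure_pmf_of_set card_bool_lists)
  also have "\<dots> = (1 / 2 ^ F) ^ card ({..<n} \<inter> {i. \<not> B i})"
    by (subst prod.If_cases) auto
  also have "{..<n} \<inter> {i. \<not> B i} = unerased n B" by auto
  finally show ?thesis .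
qed

lemma prob_agree_random_codebook:
  assumes "m < T" "m' < T" "m \<noteq> m'"
  shows "measure_pmf.prob (random_codebook_pmf T n F) {C. agree n B (C m') (C m)}
           = (1 / 2 ^ F) ^ card (unerased n B)"
proof -
  define V where "V = uniform_block_pmf n F"
  define R where "R = Pi_pmf ({..<T} - {m'}) (\<lambda>_. replicate F False) (\<lambda>_. V)"
  have T: "{..<T} = insert m' ({..<T} - {m'})" using assms by auto
  have "random_codebook_pmf T n F = map_pmf (\<lambda>(y, f). f(m' := y)) (pair_pmf V R)"
    unfolding random_codebook_pmf_def R_def V_def by (subst T, subst Pi_pmf_insert) auto
  hence "measure_pmf.prob (random_codebook_pmf T n F) {C. agree n B (C m') (C m)}
      = measure_pmf.prob (pair_pmf V R) {(y, f). agree n B y (f m)}"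
    using assms by (simp add: vimage_def case_prod_unfold)
  also have "\<dots> = measure_pmf.expectation R (\<lambda>f. measure_pmf.prob V {y. agree n B y (f m)})"
    unfolding measure_pmf_prob_pair by (rule expectation_prob_commute)
  also have "\<dots> = measure_pmf.expectation R (\<lambda>f. (1 / 2 ^ F) ^ card (unerased n B))"
  proof (intro integral_cong_AE AE_pmfI)
    fix f assume "f \<in> set_pmf R"
    hence "f m \<in> set_pmf V" using assms unfolding R_def by (auto simp: set_Pi_pmf PiE_dflt_def)
    thus "measure_pmf.prob V {y. agree n B y (f m)} = (1 / 2 ^ F) ^ card (unerased n B)"
      unfolding V_def by (intro prob_agree_uniform_block length_of_uniform_block)
  qed auto
  finally show ?thesis by simp
qed

lemma prob_confusable_le:
  assumes "m < T"
  shows "measure_pmf.prob (random_codebook_pmf T n F) {C. confusable n T C B m}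
           \<le> real T * (1 / 2 ^ F) ^ card (unerased n B)"
proof -
  have "{C. confusable n T C B m} = (\<Union>m'\<in>{..<T} - {m}. {C. agree n B (C m') (C m)})"
    unfolding confusable_def by auto
  hence "measure_pmf.prob (random_codebook_pmf T n F) {C. confusable n T C B m}
      \<le> (\<Sum>m'\<in>{..<T} - {m}. measure_pmf.prob (random_codebook_pmf T n F) {C. agree n B (C m') (C m)})"
    by (simp add: measure_pmf.finite_measure_subadditive_finite)
  also have "\<dots> = (\<Sum>m'\<in>{..<T} - {m}. (1 / 2 ^ F) ^ card (unerased n B))"
    using assms by (intro sum.cong) (auto intro!: prob_agree_random_codebook)
  also have "\<dots> \<le> real T * (1 / 2 ^ F) ^ card (unerased n B)"
    using assms by (simp add: card_Diff_singleton)
  finally show ?thesis .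
qed

lemma consistent_decode_eq:
  assumes "m < T" "\<not> confusable n T C B m"
  shows "consistent_decode C T (received n B (C m)) = m"
proof -
  define m' where "m' = consistent_decode C T (received n B (C m))"
  have m': "m' < T \<and> (\<forall>i. received n B (C m) i \<noteq> None \<longrightarrow> received n B (C m) i = Some (C m' i))"
    unfolding m'_def consistent_decode_def by (rule someI[of _ m]) (use assms in \<open>simp add: received_def\<close>)
  have "C m' i = C m i" if "i < n" "\<not> B i" for i
    using m'[THEN conjunct2, rule_format, of i] that by (simp add: received_def)
  hence "agree n B (C m') (C m)" unfolding agree_def by simp
  thus ?thesis using assms(2) m' unfolding confusable_def m'_def by blast
qed

lemma expectation_prob_confusable_le:
  fixes t :: real and index :: "nat \<Rightarrow> nat \<Rightarrow> nat"
  assumes L: "L \<ge> 1" and \<delta>: "0 \<le> \<delta>" "\<delta> \<le> 1"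
    and index: "\<And>w1 w2. w1 \<in> {1..L} \<Longrightarrow> w2 \<in> {1..L} \<Longrightarrow> index w1 w2 < T"
  shows "measure_pmf.expectation (random_codebook_pmf T n F)
           (\<lambda>C. measure_pmf.prob (erasure_src_pmf n L \<delta>) {(w1, w2, B). confusable n T C B (index w1 w2)})
       \<le> measure_pmf.prob (binomial_pmf n (1 - \<delta>)) {k. real k \<le> t} + real T * 2 powr (- (real F * t))"
proof -
  let ?src = "erasure_src_pmf n L \<delta>" and ?code = "random_codebook_pmf T n F"
  define G where "G k = min 1 (real T * (1 / 2 ^ F) ^ k)" for k :: nat
  have "measure_pmf.expectation ?code
          (\<lambda>C. measure_pmf.prob ?src {(w1, w2, B). confusable n T C B (index w1 w2)})
      = measure_pmf.expectation ?src
          (\<lambda>(w1, w2, B). measure_pmf.prob ?code {C. confusable n T C B (index w1 w2)})"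
    using expectation_prob_commute[of ?code ?src "\<lambda>C (w1, w2, B). confusable n T C B (index w1 w2)"]
    by (simp add: case_prod_unfold)
  also have "\<dots> \<le> measure_pmf.expectation ?src (\<lambda>(w1, w2, B). G (card (unerased n B)))"
  proof (intro integral_mono_AE AE_pmfI)
    show "integrable ?src (\<lambda>(w1, w2, B). measure_pmf.prob ?code {C. confusable n T C B (index w1 w2)})"
      by (rule measure_pmf.integrable_const_bound[where B=1]) (auto simp: case_prod_unfold)
    show "integrable ?src (\<lambda>(w1, w2, B). G (card (unerased n B)))"
      by (rule measure_pmf.integrable_const_bound[where B=1]) (auto simp: G_def case_prod_unfold)
    fix s assume "s \<in> set_pmf ?src"
    thus "(\<lambda>(w1, w2, B). measure_pmf.prob ?code {C. confusable n T C B (index w1 w2)}) s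
          \<le> (\<lambda>(w1, w2, B). G (card (unerased n B))) s"
      using set_erasure_src_pmf[OF L] index prob_confusable_le
      by (cases s) (auto simp: G_def)
  qed
  also have "\<dots> = measure_pmf.expectation (erasure_pmf n \<delta>) (\<lambda>B. G (card (unerased n B)))"
    by (subst map_erasure_src_pmf_pattern[where n=n and L=L and \<delta>=\<delta>, symmetric]) (simp add: case_prod_unfold)
  also have "\<dots> \<le> measure_pmf.prob (binomial_pmf n (1 - \<delta>)) {k. real k \<le> t} + real T * 2 powr (- (real F * t))"
  proof (rule expectation_erasure_pmf_le[OF \<delta>])
    fix B
    assume "\<not> real (card (unerased n B)) \<le> t"
    hence "2 powr (- (real F * real (card (unerased n B)))) \<le> (2::real) powr (- (real F * t))"
      by (intro powr_mono) (auto intro: mult_left_mono)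
    moreover have "(1 / 2 ^ F) ^ k = (2::real) powr (- (real F * real k))" for k
      by (simp add: powr_minus powr_realpow power_mult power_one_over field_simps flip: of_nat_mult)
    ultimately show "G (card (unerased n B)) \<le> real T * 2 powr (- (real F * t))"
      unfolding G_def by (metis min.coboundedI2 mult_left_mono of_nat_0_le_iff)
  qed (auto simp: G_def)
  finally show ?thesis .
qed

lemma exists_codebook_rarely_confusable:
  fixes t :: real and index :: "nat \<Rightarrow> nat \<Rightarrow> nat"
  assumes L: "L \<ge> 1" and \<delta>: "0 \<le> \<delta>" "\<delta> \<le> 1"
    and index: "\<And>w1 w2. w1 \<in> {1..L} \<Longrightarrow> w2 \<in> {1..L} \<Longrightarrow> index w1 w2 < T"
  shows "\<exists>C. (\<forall>m i. length (C m i) = F) \<and>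
     measure_pmf.prob (erasure_src_pmf n L \<delta>) {(w1, w2, B). confusable n T C B (index w1 w2)}
       \<le> measure_pmf.prob (binomial_pmf n (1 - \<delta>)) {k. real k \<le> t} + real T * 2 powr (- (real F * t))"
proof -
  define bad where "bad C = measure_pmf.prob (erasure_src_pmf n L \<delta>)
    {(w1, w2, B). confusable n T C B (index w1 w2)}" for C
  obtain C where "C \<in> set_pmf (random_codebook_pmf T n F)"
    and "bad C \<le> measure_pmf.expectation (random_codebook_pmf T n F) bad"
    using exists_in_set_pmf_le_expectation[of bad 1] unfolding bad_def by auto
  thus ?thesis
    using expectation_prob_confusable_le[OF L \<delta> index, where n = n and F = F and t = t] length_of_random_codebook
    unfolding bad_def by (meson order_trans)
qed

lemma err_prob_le_of_codebook:
  assumes q: "measure_pmf.prob q {e. fst e} = \<delta>" "measure_pmf.prob q {e. snd e} = \<delta>"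
    and L: "L \<ge> 1"
    and index: "\<And>w1 w2. w1 \<in> {1..L} \<Longrightarrow> w2 \<in> {1..L} \<Longrightarrow> index w1 w2 < T"
    and rec1: "\<And>w1 w2. w1 \<in> {1..L} \<Longrightarrow> w2 \<in> {1..L} \<Longrightarrow> unpack1 (index w1 w2) (g w1 w2) = sel (fst d) w1 w2"
    and rec2: "\<And>w1 w2. w1 \<in> {1..L} \<Longrightarrow> w2 \<in> {1..L} \<Longrightarrow> unpack2 (index w1 w2) = sel (snd d) w1 w2"
    and f: "f d = (\<lambda>w1 w2. C (index w1 w2))"
    and dec1: "dec1 d = (\<lambda>Y v. unpack1 (consistent_decode C T Y) v)"
    and dec2: "dec2 d = (\<lambda>Y. unpack2 (consistent_decode C T Y))"
    and bad: "measure_pmf.prob (erasure_src_pmf n L \<delta>) {(w1, w2, B). confusable n T C B (index w1 w2)} \<le> \<beta>"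
  shows "err_prob n L q f g dec1 dec2 d \<le> 2 * \<beta>"
proof -
  let ?src = "erasure_src_pmf n L \<delta>"
  let ?Bad = "{(w1, w2, B). confusable n T C B (index w1 w2)}"
  have decoded: "(w1, w2, B) \<in> ?Bad \<or> consistent_decode C T (received n B (f d w1 w2)) = index w1 w2
      \<and> w1 \<in> {1..L} \<and> w2 \<in> {1..L}"
    if "(w1, w2, B) \<in> set_pmf ?src" for w1 w2 B
  proof -
    have "w1 \<in> {1..L} \<and> w2 \<in> {1..L}" by (rule set_erasure_src_pmf[OF L that])
    thus ?thesis using index consistent_decode_eq[of "index w1 w2" T n C B] unfolding f by auto
  qed
  have "error_event1 n f g dec1 d \<inter> set_pmf ?src \<subseteq> ?Bad"
    using rec1 by (fastforce simp: error_event1_def dec1 dest: decoded)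
  hence "measure_pmf.prob ?src (error_event1 n f g dec1 d) \<le> \<beta>"
    using measure_pmf.finite_measure_mono[of _ ?Bad ?src] measure_Int_set_pmf bad
    by (metis (no_types, lifting) order_trans sets_measure_pmf UNIV_I)
  moreover have "error_event2 n f dec2 d \<inter> set_pmf ?src \<subseteq> ?Bad"
    using rec2 by (fastforce simp: error_event2_def dec2 dest: decoded)
  hence "measure_pmf.prob ?src (error_event2 n f dec2 d) \<le> \<beta>"
    using measure_pmf.finite_measure_mono[of _ ?Bad ?src] measure_Int_set_pmf bad
    by (metis (no_types, lifting) order_trans sets_measure_pmf UNIV_I)
  ultimately show ?thesis
    using err_prob_le_error_events[OF q, of n L f g dec1 dec2 d] by linarith
qed


section \<open>Achievability\<close>

text \<open>For distinct demands the codeword index carries W_d2 - 1 as its low digit in base L and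
  (W_d1 - 1) div Lc as its high digit; receiver 1 recovers (W_d1 - 1) mod Lc from its cache.\<close>
definition codeword_index :: "nat \<Rightarrow> nat \<Rightarrow> nat \<times> nat \<Rightarrow> nat \<Rightarrow> nat \<Rightarrow> nat" where
  "codeword_index L Lc d w1 w2 =
     (if fst d = snd d then sel (snd d) w1 w2 - 1
      else (sel (snd d) w1 w2 - 1) + L * ((sel (fst d) w1 w2 - 1) div Lc))"

definition cache_index :: "nat \<Rightarrow> nat \<Rightarrow> nat \<Rightarrow> nat" where
  "cache_index Lc w1 w2 = (w1 - 1 + (w2 - 1)) mod Lc + 1"

definition recover1 :: "nat \<Rightarrow> nat \<Rightarrow> nat \<times> nat \<Rightarrow> nat \<Rightarrow> nat \<Rightarrow> nat" where
  "recover1 L Lc d m v =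
     (if fst d = snd d then m mod L + 1
      else (m div L) * Lc + ((v - 1) + Lc - (m mod L) mod Lc) mod Lc + 1)"

definition recover2 :: "nat \<Rightarrow> nat \<Rightarrow> nat" where
  "recover2 L m = m mod L + 1"

lemma sel_in_range: "w1 \<in> {1..L} \<Longrightarrow> w2 \<in> {1..L} \<Longrightarrow> sel k w1 w2 \<in> {1..L}"
  by (simp add: sel_def)

lemma add_mod_diff_mod:
  fixes a b c :: nat
  assumes "c > 0"
  shows "((a + b) mod c + c - b mod c) mod c = a mod c"
proof -
  define u where "u = a mod c"
  define w where "w = b mod c"
  have u: "u < c" and w: "w < c" using assms by (auto simp: u_def w_def)
  have e: "(a + b) mod c = (u + w) mod c" by (simp add: u_def w_def mod_add_eq)
  show ?thesis
  proof (cases "u + w < c")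
    case True
    hence "(a + b) mod c + c - b mod c = u + c" using e w_def by simp
    thus ?thesis using u by (simp add: u_def)
  next
    case False
    hence "(u + w) mod c = u + w - c" using u w by (simp add: mod_if)
    hence "(a + b) mod c + c - b mod c = u" using e w_def False by simp
    thus ?thesis using u by (simp add: u_def)
  qed
qed

context
  fixes L w1 w2 :: nat
  assumes w1: "w1 \<in> {1..L}" and w2: "w2 \<in> {1..L}"
begin

lemma codeword_index_less: "codeword_index L Lc d w1 w2 < L * ((L - 1) div Lc + 1)"
proof -
  define a where "a = sel (fst d) w1 w2 - 1"
  define b where "b = sel (snd d) w1 w2 - 1"
  have "a < L" "b < L"
    using sel_in_range[OF w1 w2, of "fst d"] sel_in_range[OF w1 w2, of "snd d"]
    unfolding a_def b_def by auto
  hence "a div Lc \<le> (L - 1) div Lc" by (intro div_le_mono) auto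
  hence "b + L * (a div Lc) < L + L * ((L - 1) div Lc)"
    using \<open>b < L\<close> by (meson add_less_le_mono mult_le_mono2)
  thus ?thesis unfolding codeword_index_def a_def[symmetric] b_def[symmetric]
    using \<open>b < L\<close> by (auto simp: algebra_simps intro: less_le_trans)
qed

lemma recover2_codeword_index: "recover2 L (codeword_index L Lc d w1 w2) = sel (snd d) w1 w2"
proof -
  define b where "b = sel (snd d) w1 w2 - 1"
  have b: "sel (snd d) w1 w2 = b + 1" "b < L"
    using sel_in_range[OF w1 w2, of "snd d"] unfolding b_def by auto
  have "codeword_index L Lc d w1 w2 = b + L * (if fst d = snd d then 0 else (sel (fst d) w1 w2 - 1) div Lc)"
    unfolding codeword_index_def b_def by simp
  thus ?thesis using b by (simp add: recover2_def)
qed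

lemma recover1_codeword_index:
  assumes Lc: "Lc \<ge> 1" and d: "d \<in> {1,2} \<times> {1,2}"
  shows "recover1 L Lc d (codeword_index L Lc d w1 w2) (cache_index Lc w1 w2) = sel (fst d) w1 w2"
proof (cases "fst d = snd d")
  case True
  thus ?thesis using sel_in_range[OF w1 w2, of "snd d"]
    by (auto simp: recover1_def codeword_index_def)
next
  case False
  define a where "a = sel (fst d) w1 w2 - 1"
  define b where "b = sel (snd d) w1 w2 - 1"
  have a: "sel (fst d) w1 w2 = a + 1" and b: "b < L"
    using sel_in_range[OF w1 w2, of "fst d"] sel_in_range[OF w1 w2, of "snd d"]
    unfolding a_def b_def by auto
  have index: "codeword_index L Lc d w1 w2 = b + L * (a div Lc)"
    using False unfolding codeword_index_def a_def b_def by simp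
  have "cache_index Lc w1 w2 - 1 = (a + b) mod Lc"
    using d False w1 w2 unfolding cache_index_def a_def b_def sel_def by (auto simp: add.commute)
  hence "((cache_index Lc w1 w2 - 1) + Lc - b mod Lc) mod Lc = a mod Lc"
    using add_mod_diff_mod[of Lc a b] Lc by simp
  thus ?thesis
    using False a b unfolding recover1_def index by simp
qed

end

lemma codebook_size_le:
  assumes Lc: "Lc \<ge> 1" "real Lc \<ge> 2 powr (real n * M) / 2" and L: "real L \<le> 2 powr (real n * R)"
  shows "real (L * ((L - 1) div Lc + 1)) \<le> 2 * 2 powr (real n * (2 * R - M)) + 2 powr (real n * R)"
proof -
  define X where "X = (2::real) powr (real n * R)"
  define Y where "Y = (2::real) powr (real n * M)"
  have "real ((L - 1) div Lc) \<le> real (L - 1) / real Lc" by (rule of_nat_div_le_of_nat)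
  also have "\<dots> \<le> real L / real Lc" using Lc by (intro divide_right_mono) auto
  finally have "real L * real ((L - 1) div Lc) \<le> real L * (real L / real Lc)"
    by (rule mult_left_mono) simp
  hence "real (L * ((L - 1) div Lc + 1)) \<le> real L * (real L / real Lc) + real L"
    by (simp add: algebra_simps)
  also have "real L * (real L / real Lc) \<le> X * X / (Y / 2)"
  proof -
    have "real L * (real L / real Lc) \<le> X * X / real Lc"
      using L unfolding X_def by (simp add: divide_right_mono mult_mono)
    also have "\<dots> \<le> X * X / (Y / 2)"
      using Lc unfolding Y_def by (intro divide_left_mono) auto
    finally show ?thesis .
  qed
  also have "X * X / (Y / 2) = 2 * 2 powr (real n * (2 * R - M))"
    unfolding X_def Y_def by (simp add: powr_add[symmetric] powr_diff algebra_simps)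
  finally show ?thesis using L unfolding X_def by simp
qed

lemma err_prob_le_codeword_index:
  assumes q: "measure_pmf.prob q {e. fst e} = \<delta>" "measure_pmf.prob q {e. snd e} = \<delta>"
    and L: "L \<ge> 1" and Lc: "Lc \<ge> 1" and d: "d \<in> {1,2} \<times> {1,2}"
    and T: "T = L * ((L - 1) div Lc + 1)"
    and confusable: "measure_pmf.prob (erasure_src_pmf n L \<delta>)
        {(w1, w2, B). confusable n T (C d) B (codeword_index L Lc d w1 w2)} \<le> \<beta>"
  shows "err_prob n L q (\<lambda>d w1 w2. C d (codeword_index L Lc d w1 w2)) (cache_index Lc)
           (\<lambda>d Y v. recover1 L Lc d (consistent_decode (C d) T Y) v)
           (\<lambda>d Y. recover2 L (consistent_decode (C d) T Y)) d \<le> 2 * \<beta>"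
proof (rule err_prob_le_of_codebook[OF q L _ _ _ _ _ _ confusable])
  fix w1 w2 assume w: "w1 \<in> {1..L}" "w2 \<in> {1..L}"
  show "codeword_index L Lc d w1 w2 < T"
    unfolding T using w by (rule codeword_index_less)
  show "recover1 L Lc d (codeword_index L Lc d w1 w2) (cache_index Lc w1 w2) = sel (fst d) w1 w2"
    using w Lc d by (rule recover1_codeword_index)
  show "recover2 L (codeword_index L Lc d w1 w2) = sel (snd d) w1 w2"
    using w by (rule recover2_codeword_index)
qed simp_all

lemma exists_good_code:
  fixes t :: real
  assumes q: "measure_pmf.prob q {e. fst e} = \<delta>" "measure_pmf.prob q {e. snd e} = \<delta>"
    and \<delta>: "0 \<le> \<delta>" "\<delta> \<le> 1" and L: "L \<ge> 1" and Lc: "Lc \<ge> 1"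
  shows "\<exists>f g dec1 dec2. valid_code F n L Lc f g \<and>
           (\<forall>d\<in>{1,2} \<times> {1,2}. err_prob n L q f g dec1 dec2 d
              \<le> 2 * (measure_pmf.prob (binomial_pmf n (1 - \<delta>)) {k. real k \<le> t}
                     + real (L * ((L - 1) div Lc + 1)) * 2 powr (- (real F * t))))"
proof -
  define T where "T = L * ((L - 1) div Lc + 1)"
  define \<beta> where "\<beta> = measure_pmf.prob (binomial_pmf n (1 - \<delta>)) {k. real k \<le> t} + real T * 2 powr (- (real F * t))"
  have "\<forall>d. \<exists>C. (\<forall>m i. length (C m i) = F) \<and>
      measure_pmf.prob (erasure_src_pmf n L \<delta>)
        {(w1, w2, B). confusable n T C B (codeword_index L Lc d w1 w2)} \<le> \<beta>"
    unfolding \<beta>_def T_def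
    by (intro allI exists_codebook_rarely_confusable[OF L \<delta>] codeword_index_less)
  then obtain C where "\<forall>d. (\<forall>m i. length (C d m i) = F) \<and>
      measure_pmf.prob (erasure_src_pmf n L \<delta>)
        {(w1, w2, B). confusable n T (C d) B (codeword_index L Lc d w1 w2)} \<le> \<beta>"
    by (rule choice[THEN exE])
  hence "valid_code F n L Lc (\<lambda>d w1 w2. C d (codeword_index L Lc d w1 w2)) (cache_index Lc)"
    and "\<forall>d\<in>{1,2} \<times> {1,2}. err_prob n L q (\<lambda>d w1 w2. C d (codeword_index L Lc d w1 w2)) (cache_index Lc)
           (\<lambda>d Y v. recover1 L Lc d (consistent_decode (C d) T Y) v)
           (\<lambda>d Y. recover2 L (consistent_decode (C d) T Y)) d \<le> 2 * \<beta>"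
    using Lc err_prob_le_codeword_index[OF q L Lc _ T_def]
    by (auto simp: valid_code_def cache_index_def Suc_le_eq)
  thus ?thesis unfolding \<beta>_def T_def by blast
qed

lemma exists_good_code_msg_size:
  assumes q: "measure_pmf.prob q {e. fst e} = \<delta>" "measure_pmf.prob q {e. snd e} = \<delta>"
    and \<delta>: "0 \<le> \<delta>" "\<delta> \<le> 1" and n: "n > 0" and \<eta>: "\<eta> \<ge> 0" and R: "R \<ge> 0" and M: "M \<ge> 0"
  shows "\<exists>f g dec1 dec2. valid_code F n (msg_size n R) (msg_size n M) f g \<and>
           (\<forall>d\<in>{1,2} \<times> {1,2}. err_prob n (msg_size n R) q f g dec1 dec2 d
              \<le> 2 * exp (- (2 * real n * \<eta>^2))
                + 4 * 2 powr (real n * (2 * R - M - real F * (1 - \<delta> - \<eta>)))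
                + 2 * 2 powr (real n * (R - real F * (1 - \<delta> - \<eta>))))"
proof -
  define L where "L = msg_size n R"
  define Lc where "Lc = msg_size n M"
  define t where "t = real n * (1 - \<delta> - \<eta>)"
  have L: "L \<ge> 1" and Lc: "Lc \<ge> 1" unfolding L_def Lc_def using msg_size_pos R M by auto
  have "measure_pmf.prob (binomial_pmf n (1 - \<delta>)) {k. real k \<le> t} \<le> exp (- (2 * real n * \<eta>^2))"
    unfolding t_def using binomial_lower_tail[of n "1 - \<delta>" \<eta>] \<delta> \<eta> n by simp
  moreover have "real (L * ((L - 1) div Lc + 1)) * 2 powr (- (real F * t))
      \<le> 2 * 2 powr (real n * (2 * R - M - real F * (1 - \<delta> - \<eta>))) + 2 powr (real n * (R - real F * (1 - \<delta> - \<eta>)))"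
  proof -
    have "real (L * ((L - 1) div Lc + 1)) * 2 powr (- (real F * t))
        \<le> (2 * 2 powr (real n * (2 * R - M)) + 2 powr (real n * R)) * 2 powr (- (real F * t))"
      using codebook_size_le[OF Lc _ msg_size_le[of n R, folded L_def]] msg_size_ge[of n M] Lc
      unfolding Lc_def by (intro mult_right_mono) auto
    also have "\<dots> = 2 * 2 powr (real n * (2 * R - M - real F * (1 - \<delta> - \<eta>)))
                    + 2 powr (real n * (R - real F * (1 - \<delta> - \<eta>)))"
      unfolding t_def by (simp add: powr_add[symmetric] algebra_simps)
    finally show ?thesis .
  qed
  moreover obtain f g dec1 dec2 where code: "valid_code F n L Lc f g"
    and err: "\<forall>d\<in>{1,2} \<times> {1,2}. err_prob n L q f g dec1 dec2 d
           \<le> 2 * (measure_pmf.prob (binomial_pmf n (1 - \<delta>)) {k. real k \<le> t}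
                  + real (L * ((L - 1) div Lc + 1)) * 2 powr (- (real F * t)))"
    using exists_good_code[OF q \<delta> L Lc, where t = t] by blast
  ultimately have "err_prob n L q f g dec1 dec2 d
      \<le> 2 * exp (- (2 * real n * \<eta>^2))
        + 4 * 2 powr (real n * (2 * R - M - real F * (1 - \<delta> - \<eta>)))
        + 2 * 2 powr (real n * (R - real F * (1 - \<delta> - \<eta>)))" if "d \<in> {1,2} \<times> {1,2}" for d
    using err[rule_format, OF that] by argo
  thus ?thesis using code unfolding L_def Lc_def by blast
qed

lemma achievable_of_less:
  assumes F: "F > 0" and \<delta>: "0 < \<delta>" "\<delta> < 1" and M: "M \<ge> 0"
    and q: "measure_pmf.prob q {e. fst e} = \<delta>" "measure_pmf.prob q {e. snd e} = \<delta>"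
    and R: "0 < R" "R < real F * (1 - \<delta>)" "2 * R < real F * (1 - \<delta>) + M"
  shows "achievable F q R M"
  unfolding achievable_def
proof (intro allI impI)
  fix \<epsilon> :: real and N :: nat
  assume \<epsilon>: "\<epsilon> > 0"
  define m where "m = min (real F * (1 - \<delta>) - R) (real F * (1 - \<delta>) + M - 2 * R)"
  define \<eta> where "\<eta> = m / (2 * real F)"
  define \<gamma>1 where "\<gamma>1 = real F * (1 - \<delta> - \<eta>) - R"
  define \<gamma>2 where "\<gamma>2 = real F * (1 - \<delta> - \<eta>) - (2 * R - M)"
  have m: "0 < m" "m \<le> real F * (1 - \<delta>) - R" "m \<le> real F * (1 - \<delta>) + M - 2 * R"
    using R unfolding m_def by auto
  have F\<eta>: "real F * \<eta> = m / 2" using F unfolding \<eta>_def by simp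
  have \<eta>: "\<eta> > 0" unfolding \<eta>_def using m F by simp
  have \<gamma>: "\<gamma>1 > 0" "\<gamma>2 > 0" using m F\<eta> unfolding \<gamma>1_def \<gamma>2_def by (auto simp: algebra_simps)
  have "(\<lambda>n. 2 * exp (- (2 * real n * \<eta>^2)) + 4 * 2 powr (- (real n * \<gamma>2)) + 2 * 2 powr (- (real n * \<gamma>1)))
          \<longlonglongrightarrow> 0"
  proof -
    have "(\<lambda>n. 2 * exp (- (2 * real n * \<eta>^2))) \<longlonglongrightarrow> 0"
      "(\<lambda>n. 4 * 2 powr (- (real n * \<gamma>2))) \<longlonglongrightarrow> 0" "(\<lambda>n. 2 * 2 powr (- (real n * \<gamma>1))) \<longlonglongrightarrow> 0"
      using \<gamma> \<eta> by real_asymp+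
    thus ?thesis by (intro tendsto_add_zero)
  qed
  hence "eventually (\<lambda>n. 2 * exp (- (2 * real n * \<eta>^2)) + 4 * 2 powr (- (real n * \<gamma>2))
            + 2 * 2 powr (- (real n * \<gamma>1)) < \<epsilon>) sequentially"
    using \<epsilon> by (rule order_tendstoD)
  moreover have "eventually (\<lambda>n. n \<ge> max 1 N) sequentially"
    by (rule eventually_ge_at_top)
  ultimately have "\<forall>\<^sub>F n in sequentially. 2 * exp (- (2 * real n * \<eta>^2)) + 4 * 2 powr (- (real n * \<gamma>2))
      + 2 * 2 powr (- (real n * \<gamma>1)) < \<epsilon> \<and> n \<ge> max 1 N"
    by eventually_elim blast
  then obtain n where small: "2 * exp (- (2 * real n * \<eta>^2)) + 4 * 2 powr (- (real n * \<gamma>2))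
      + 2 * 2 powr (- (real n * \<gamma>1)) < \<epsilon>" and n: "n \<ge> max 1 N"
    unfolding eventually_sequentially by blast
  have exponents: "real n * (2 * R - M - real F * (1 - \<delta> - \<eta>)) = - (real n * \<gamma>2)"
    "real n * (R - real F * (1 - \<delta> - \<eta>)) = - (real n * \<gamma>1)"
    unfolding \<gamma>1_def \<gamma>2_def by (simp_all add: algebra_simps)
  obtain f g dec1 dec2 where code: "valid_code F n (msg_size n R) (msg_size n M) f g"
    and err: "\<forall>d\<in>{1,2} \<times> {1,2}. err_prob n (msg_size n R) q f g dec1 dec2 d
              \<le> 2 * exp (- (2 * real n * \<eta>^2)) + 4 * 2 powr (- (real n * \<gamma>2))
                + 2 * 2 powr (- (real n * \<gamma>1))"
    using exists_good_code_msg_size[OF q, of n \<eta> R M F] n \<delta> \<eta> R M unfolding exponents by auto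
  have "err_prob n (msg_size n R) q f g dec1 dec2 d < \<epsilon>" if "d \<in> {1,2} \<times> {1,2}" for d
    using err[rule_format, OF that] small by linarith
  moreover have "N \<le> n" using n by simp
  ultimately show "\<exists>n\<ge>N. \<exists>f g dec1 dec2. valid_code F n (msg_size n R) (msg_size n M) f g \<and>
          (\<forall>d\<in>{1,2} \<times> {1,2}. err_prob n (msg_size n R) q f g dec1 dec2 d < \<epsilon>)"
    using code by blast
qed

lemma Sup_eq_of_interval_subset:
  fixes S :: "real set"
  assumes "0 < C" and "\<And>R. 0 < R \<Longrightarrow> R < C \<Longrightarrow> R \<in> S" and "\<And>R. R \<in> S \<Longrightarrow> R \<le> C"
  shows "Sup S = C"
proof (rule cSup_eq_non_empty)
  show "S \<noteq> {}" using assms(1) assms(2)[of "C / 2"] by auto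
  show "\<And>R. R \<in> S \<Longrightarrow> R \<le> C" by (fact assms(3))
  fix y assume y: "\<And>R. R \<in> S \<Longrightarrow> R \<le> y"
  show "C \<le> y"
  proof (rule ccontr)
    assume "\<not> C \<le> y"
    hence "(max y 0 + C) / 2 \<in> S" using assms(1) by (intro assms(2)) auto
    thus False using y \<open>\<not> C \<le> y\<close> assms(1) by force
  qed
qed

theorem corollary4:
  fixes F :: nat and \<delta> M :: real and q :: "(bool \<times> bool) pmf"
  assumes "F > 0" and "0 < \<delta>" and "\<delta> < 1"
    and "measure_pmf.prob q {e. fst e} = \<delta>"
    and "measure_pmf.prob q {e. snd e} = \<delta>"
    and "0 \<le> M / 2" and "M / 2 \<le> real F * (1 - \<delta>)"
  shows "capacity F q M =
           (if M / 2 \<le> real F * (1 - \<delta>) / 2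
            then real F * (1 - \<delta>) / 2 + M / 2
            else real F * (1 - \<delta>))"
proof -
  define c where "c = real F * (1 - \<delta>)"
  have M: "M \<ge> 0" and c: "c > 0" using assms unfolding c_def by auto
  have "capacity F q M = min c ((c + M) / 2)"
    unfolding capacity_def
  proof (rule Sup_eq_of_interval_subset)
    show "0 < min c ((c + M) / 2)" using c M by simp
    show "R \<in> {R. achievable F q R M}" if "0 < R" "R < min c ((c + M) / 2)" for R
      using achievable_of_less[OF assms(1-3) M assms(4,5)] that unfolding c_def by auto
    show "R \<le> min c ((c + M) / 2)" if "R \<in> {R. achievable F q R M}" for R
    proof -
      have "2 * R \<le> c + min R M"
        using achievable_rate_le[OF assms(1-3) M assms(4,5)] that unfolding c_def by simp
      thus ?thesis by (cases "R \<le> M") (auto simp: min_def)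
    qed
  qed
  thus ?thesis unfolding c_def by (auto simp: min_def field_simps)
qed

end
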